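(* Let $F\in\mathcal{F}^n$ with radial function $\rho$. Then for each $x\in\mathbf{S}^n$ and each $N(x)\in\alpha_F(x)$ there exists a unique $v(x)\in\partial\rho(x)$ such that $$N(x)=\frac{-v(x)+\rho(x)x}{\sqrt{|v(x)|^2+\rho^2(x)}},$$ and $$\alpha_F(x)=\left\{\frac{-v(x)+\rho(x)x}{\sqrt{|v(x)|^2+\rho^2(x)}}:\ v(x)\in\partial\rho(x)\right\}.$$
   Context: $\mathbf{S}^n$ is the unit sphere in $\mathbb{R}^{n+1}$, $n\ge1$, centered at the origin $\mathcal{O}$. $\mathcal{F}^n$ is the set of boundaries of compact convex sets in $\mathbb{R}^{n+1}$ containing $\mathcal{O}$ in their interior; for $F\in\mathcal{F}^n$ its radial function $\rho(x)$ is the distance from $\mathcal{O}$ to the point where the ray in direction $x\in\mathbf{S}^n$ meets $F$, and its generalized Gauss map $\alpha_F(x)$ is the set of outward unit normals of all supporting hyperplanes to $F$ at $\rho(x)x$. For $f\in C(\mathbf{S}^n)$ and $x_0\in\mathbf{S}^n$, with $T\mathbf{S}^n_{x_0}=\{v\in\mathbb{R}^{n+1}:\langle v,x_0\rangle=0\}$, the subdifferential is $\partial f(x_0)=\{v\in T\mathbf{S}^n_{x_0}: f(x)\langle -v+f(x_0)x_0,x\rangle\le f^2(x_0)\ \forall x\in\mathbf{S}^n\}$. *)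

theory Defs
  imports "HOL-Analysis.Analysis"
begin

text \<open>R^{n+1} is an abstract euclidean space 'a; S^n is sphere 0 1.
  The class F^n: boundaries of compact convex sets containing the origin in their interior.\<close>
definition convex_boundaries :: "'a::euclidean_space set set" where
  "convex_boundaries = {F. \<exists>K. compact K \<and> convex K \<and> 0 \<in> interior K \<and> F = frontier K}"

definition radial_fun :: "'a::euclidean_space set \<Rightarrow> 'a \<Rightarrow> real" where
  "radial_fun F x = (THE t. t > 0 \<and> t *\<^sub>R x \<in> F)"

definition gen_gauss_map :: "'a::euclidean_space set \<Rightarrow> 'a \<Rightarrow> 'a set" where
  "gen_gauss_map F x = {N. norm N = 1 \<and>
      (\<forall>y\<in>F. N \<bullet> y \<le> N \<bullet> (radial_fun F x *\<^sub>R x))}"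

definition sphere_subdiff :: "('a::euclidean_space \<Rightarrow> real) \<Rightarrow> 'a \<Rightarrow> 'a set" where
  "sphere_subdiff f x0 = {v. v \<bullet> x0 = 0 \<and>
      (\<forall>x\<in>sphere 0 1. f x * ((- v + f x0 *\<^sub>R x0) \<bullet> x) \<le> (f x0)\<^sup>2)}"

end

theory Submission imports Defs begin

text \<open>Each ray from the origin meets F exactly once, at \<open>\<rho> u *\<^sub>R u\<close>; hence a half-space
  \<open>w \<bullet> y \<le> c\<close> contains F iff \<open>\<rho> u * (w \<bullet> u) \<le> c\<close> for all unit u, and the defining
  inequality of \<open>v \<in> \<partial>\<rho>(x)\<close> says precisely that F lies below the hyperplane through
  \<open>\<rho>(x) x\<close> with normal \<open>w = - v + \<rho>(x) x\<close>. For \<open>v \<bullet> x = 0\<close> the normalisation of w is a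
  bijection from the tangent space at x onto the unit vectors N with \<open>N \<bullet> x > 0\<close>, and every
  outward normal at \<open>\<rho>(x) x\<close> has this property because F surrounds the origin.\<close>

lemma frontier_ray_unique:
  fixes K :: "'a::euclidean_space set"
  assumes K: "convex K" "0 \<in> interior K"
    and "0 < s" "0 < t" "s *\<^sub>R x \<in> frontier K" "t *\<^sub>R x \<in> frontier K"
  shows "s = t"
proof -
  have "\<not> a *\<^sub>R x \<in> frontier K"
    if "0 < a" "a < b" "b *\<^sub>R x \<in> frontier K" for a b
  proof -
    have "b *\<^sub>R x \<in> closure K"
      using that(3) by (simp add: frontier_def)
    then have "b *\<^sub>R x - (1 - a / b) *\<^sub>R (b *\<^sub>R x - 0) \<in> interior K"
      using that by (intro mem_interior_closure_convex_shrink[OF K]) auto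
    moreover have "b *\<^sub>R x - (1 - a / b) *\<^sub>R (b *\<^sub>R x - 0) = a *\<^sub>R x"
      using that by (simp add: algebra_simps)
    ultimately show ?thesis
      by (simp add: frontier_def)
  qed
  then show ?thesis
    using assms by (metis linorder_neqE_linordered_idom)
qed

lemma radial_fun_frontier_eqI:
  fixes K :: "'a::euclidean_space set"
  assumes "convex K" "0 \<in> interior K" "0 < t" "t *\<^sub>R x \<in> frontier K"
  shows "radial_fun (frontier K) x = t"
  unfolding radial_fun_def using assms frontier_ray_unique by blast

lemma radial_fun_frontier:
  fixes K :: "'a::euclidean_space set"
  assumes "compact K" "convex K" "0 \<in> interior K" "x \<noteq> 0"
  shows "0 < radial_fun (frontier K) x" "radial_fun (frontier K) x *\<^sub>R x \<in> frontier K"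
proof -
  obtain d where "0 < d" "d *\<^sub>R x \<in> frontier K"
    using ray_to_frontier[OF compact_imp_bounded assms(3,4)] assms(1) by auto
  then show "0 < radial_fun (frontier K) x" "radial_fun (frontier K) x *\<^sub>R x \<in> frontier K"
    using radial_fun_frontier_eqI assms by auto
qed

lemma radial_fun_frontier_normalize:
  fixes K :: "'a::euclidean_space set"
  assumes "convex K" "0 \<in> interior K" "y \<in> frontier K"
  shows "radial_fun (frontier K) (y /\<^sub>R norm y) *\<^sub>R (y /\<^sub>R norm y) = y"
proof -
  have "y \<noteq> 0"
    using assms by (auto simp: frontier_def)
  then have "radial_fun (frontier K) (y /\<^sub>R norm y) = norm y"
    using assms by (intro radial_fun_frontier_eqI) auto
  with \<open>y \<noteq> 0\<close> show ?thesis
    by simp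
qed

lemma convex_boundaries_radial_fun:
  assumes "F \<in> convex_boundaries" "x \<noteq> 0"
  shows "0 < radial_fun F x" "radial_fun F x *\<^sub>R x \<in> F"
  using assms radial_fun_frontier unfolding convex_boundaries_def by auto

lemma convex_boundaries_le_iff_radial_fun:
  assumes "F \<in> convex_boundaries"
  shows "(\<forall>y\<in>F. w \<bullet> y \<le> c) \<longleftrightarrow> (\<forall>u\<in>sphere 0 1. radial_fun F u * (w \<bullet> u) \<le> c)"
proof -
  obtain K where K: "compact K" "convex K" "0 \<in> interior K" and F: "F = frontier K"
    using assms unfolding convex_boundaries_def by auto
  have "radial_fun F u *\<^sub>R u \<in> F" if "u \<in> sphere 0 1" for u
    using that convex_boundaries_radial_fun(2)[OF assms, of u] by fastforce
  moreover have "\<exists>u\<in>sphere 0 1. y = radial_fun F u *\<^sub>R u" if "y \<in> F" for y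
  proof -
    have "y \<noteq> 0"
      using that K F by (auto simp: frontier_def)
    then show ?thesis
      using that radial_fun_frontier_normalize[OF K(2,3)] F
      by (intro bexI[of _ "y /\<^sub>R norm y"]) auto
  qed
  ultimately show ?thesis
    by (metis inner_scaleR_right)
qed

definition normal_of_tangent :: "real \<Rightarrow> 'a::real_inner \<Rightarrow> 'a \<Rightarrow> 'a" where
  "normal_of_tangent r x v = (1 / sqrt ((norm v)\<^sup>2 + r\<^sup>2)) *\<^sub>R (- v + r *\<^sub>R x)"

lemma norm_minus_tangent_plus_radial:
  fixes x v :: "'a::real_inner"
  assumes "norm x = 1" "v \<bullet> x = 0"
  shows "norm (- v + r *\<^sub>R x) = sqrt ((norm v)\<^sup>2 + r\<^sup>2)"
proof -
  have "orthogonal (- v) (r *\<^sub>R x)"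
    using assms(2) by (simp add: orthogonal_def)
  then have "(norm (- v + r *\<^sub>R x))\<^sup>2 = (norm v)\<^sup>2 + r\<^sup>2"
    using assms(1) by (simp only: norm_add_Pythagorean) (simp add: power_mult_distrib)
  then show ?thesis
    by (metis norm_ge_zero real_sqrt_unique)
qed

lemma normal_of_tangent_eq_scaleR:
  fixes x v :: "'a::real_inner"
  assumes "norm x = 1" "v \<bullet> x = 0"
  shows "normal_of_tangent r x v = (1 / norm (- v + r *\<^sub>R x)) *\<^sub>R (- v + r *\<^sub>R x)"
  using norm_minus_tangent_plus_radial[OF assms] by (simp add: normal_of_tangent_def)

lemma normal_of_tangent_unique:
  fixes x N :: "'a::real_inner"
  assumes x: "norm x = 1" and "0 < r" and N: "norm N = 1" "0 < N \<bullet> x"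
  shows "\<exists>!v. v \<bullet> x = 0 \<and> N = normal_of_tangent r x v"
proof
  \<comment> \<open>\<open>- v + r x\<close> must be the multiple \<open>l N\<close> of N whose x-component is r\<close>
  define l where "l = r / (N \<bullet> x)"
  have "0 < l"
    using assms by (simp add: l_def)
  define v where "v = r *\<^sub>R x - l *\<^sub>R N"
  have xx: "x \<bullet> x = 1"
    using x by (simp add: dot_square_norm)
  show "v \<bullet> x = 0 \<and> N = normal_of_tangent r x v"
  proof
    show "v \<bullet> x = 0"
      using N xx by (simp add: v_def l_def inner_diff_left)
    then show "N = normal_of_tangent r x v"
      using \<open>0 < l\<close> N x by (simp add: normal_of_tangent_eq_scaleR v_def)
  qed
  fix v' assume v': "v' \<bullet> x = 0 \<and> N = normal_of_tangent r x v'"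
  define s where "s = norm (- v' + r *\<^sub>R x)"
  have "0 < s"
    using v' x \<open>0 < r\<close> unfolding s_def by (subst norm_minus_tangent_plus_radial) (auto simp: add_nonneg_pos)
  have w': "- v' + r *\<^sub>R x = s *\<^sub>R N"
    using v' x \<open>0 < s\<close> by (simp add: normal_of_tangent_eq_scaleR s_def)
  have "r = (- v' + r *\<^sub>R x) \<bullet> x"
    using v' xx by (simp add: inner_diff_left)
  also have "\<dots> = s * (N \<bullet> x)"
    using w' by simp
  finally have "s = l"
    using N by (simp add: l_def)
  then show "v' = v"
    using w' by (simp add: v_def algebra_simps)
qed

lemma gen_gauss_map_inner_pos:
  assumes "F \<in> convex_boundaries" "norm x = 1" "N \<in> gen_gauss_map F x"
  shows "0 < N \<bullet> x"
proof -
  have N: "norm N = 1" "\<forall>y\<in>F. N \<bullet> y \<le> N \<bullet> (radial_fun F x *\<^sub>R x)"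
    using assms(3) by (auto simp: gen_gauss_map_def)
  then have "N \<noteq> 0" "x \<noteq> 0"
    using assms(2) by auto
  \<comment> \<open>test the support inequality at the point of F in direction N itself\<close>
  have "radial_fun F N * (N \<bullet> N) \<le> radial_fun F x * (N \<bullet> x)"
    using N convex_boundaries_radial_fun(2)[OF assms(1) \<open>N \<noteq> 0\<close>] by (metis inner_scaleR_right)
  moreover have "N \<bullet> N = 1"
    using N by (simp add: dot_square_norm)
  moreover have "0 < radial_fun F N" "0 < radial_fun F x"
    using convex_boundaries_radial_fun(1)[OF assms(1)] \<open>N \<noteq> 0\<close> \<open>x \<noteq> 0\<close> by auto
  ultimately have "0 < radial_fun F x * (N \<bullet> x)"
    by simp
  with \<open>0 < radial_fun F x\<close> show ?thesis
    by (simp add: zero_less_mult_iff)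
qed

lemma sphere_subdiff_radial_fun_iff:
  assumes F: "F \<in> convex_boundaries" and x: "norm x = 1" and v: "v \<bullet> x = 0"
  shows "v \<in> sphere_subdiff (radial_fun F) x
     \<longleftrightarrow> normal_of_tangent (radial_fun F x) x v \<in> gen_gauss_map F x"
proof -
  define r where "r = radial_fun F x"
  define w where "w = - v + r *\<^sub>R x"
  have "0 < r"
    using convex_boundaries_radial_fun(1)[OF F, of x] x by (fastforce simp: r_def)
  have "0 < norm w"
    using norm_minus_tangent_plus_radial[OF x v] \<open>0 < r\<close> by (simp add: w_def add_nonneg_pos)
  have "w \<bullet> (r *\<^sub>R x) = r\<^sup>2"
    using v x by (simp add: w_def inner_diff_left dot_square_norm power2_eq_square)
  then have "v \<in> sphere_subdiff (radial_fun F) x \<longleftrightarrow> (\<forall>y\<in>F. w \<bullet> y \<le> w \<bullet> (r *\<^sub>R x))"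
    using v convex_boundaries_le_iff_radial_fun[OF F]
    by (simp add: sphere_subdiff_def w_def r_def)
  also have "\<dots> \<longleftrightarrow> (\<forall>y\<in>F. (w /\<^sub>R norm w) \<bullet> y \<le> (w /\<^sub>R norm w) \<bullet> (r *\<^sub>R x))"
    using \<open>0 < norm w\<close> by (simp add: divide_le_cancel)
  also have "\<dots> \<longleftrightarrow> normal_of_tangent r x v \<in> gen_gauss_map F x"
    using \<open>0 < norm w\<close> x v
    by (simp add: gen_gauss_map_def normal_of_tangent_eq_scaleR w_def r_def divide_inverse)
  finally show ?thesis
    by (simp add: r_def)
qed

theorem corollary10:
  fixes F :: "'a::euclidean_space set"
  assumes "DIM('a) \<ge> 2"
    and "F \<in> convex_boundaries"
  shows "\<forall>x\<in>sphere 0 1.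
     (\<forall>N\<in>gen_gauss_map F x. \<exists>!v. v \<in> sphere_subdiff (radial_fun F) x \<and>
         N = (1 / sqrt ((norm v)\<^sup>2 + (radial_fun F x)\<^sup>2)) *\<^sub>R (- v + radial_fun F x *\<^sub>R x))
   \<and> gen_gauss_map F x =
       {(1 / sqrt ((norm v)\<^sup>2 + (radial_fun F x)\<^sup>2)) *\<^sub>R (- v + radial_fun F x *\<^sub>R x) | v.
          v \<in> sphere_subdiff (radial_fun F) x}"
proof
  fix x :: 'a assume "x \<in> sphere 0 1"
  then have x: "norm x = 1" by simp
  let ?G = "normal_of_tangent (radial_fun F x) x"
  have subdiff: "v \<in> sphere_subdiff (radial_fun F) x \<longleftrightarrow> v \<bullet> x = 0 \<and> ?G v \<in> gen_gauss_map F x"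
    for v
    using sphere_subdiff_radial_fun_iff[OF assms(2) x] by (auto simp: sphere_subdiff_def)
  have "0 < radial_fun F x"
    using convex_boundaries_radial_fun(1)[OF assms(2), of x] x by fastforce
  then have unique: "\<exists>!v. v \<in> sphere_subdiff (radial_fun F) x \<and> N = ?G v"
    if N: "N \<in> gen_gauss_map F x" for N
  proof -
    have "\<exists>!v. v \<bullet> x = 0 \<and> N = ?G v"
      using normal_of_tangent_unique[OF x \<open>0 < radial_fun F x\<close>]
        gen_gauss_map_inner_pos[OF assms(2) x N] N
      by (simp add: gen_gauss_map_def)
    then show ?thesis
      using N subdiff by blast
  qed
  moreover have "gen_gauss_map F x = {?G v | v. v \<in> sphere_subdiff (radial_fun F) x}"
    using unique subdiff by blast
  ultimately show "(\<forall>N\<in>gen_gauss_map F x. \<exists>!v. v \<in> sphere_subdiff (radial_fun F) x \<and>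
         N = (1 / sqrt ((norm v)\<^sup>2 + (radial_fun F x)\<^sup>2)) *\<^sub>R (- v + radial_fun F x *\<^sub>R x))
   \<and> gen_gauss_map F x =
       {(1 / sqrt ((norm v)\<^sup>2 + (radial_fun F x)\<^sup>2)) *\<^sub>R (- v + radial_fun F x *\<^sub>R x) | v.
          v \<in> sphere_subdiff (radial_fun F) x}"
    unfolding normal_of_tangent_def by blast
qed

end
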